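(* The generalized DFT $\mathcal{F}:V_\Omega\to V_A$ and the generalized IDFT $\mathcal{F}^{-1}:V_A\to V_\Omega$ (defined below) are mutually inverse linear maps: $\mathcal{F}^{-1}(\mathcal{F}((c_{\underline\omega})_\Omega))=(c_{\underline\omega})_\Omega$ for all $(c_{\underline\omega})_\Omega\in V_\Omega$ and $\mathcal{F}(\mathcal{F}^{-1}((h_{\underline a})_A))=(h_{\underline a})_A$ for all $(h_{\underline a})_A\in V_A$.
   Context: Let $q$ be a prime power, $\mathbb{F}_q$ the field with $q$ elements, and $N\ge 1$ an integer. For a finite set $S$, $V_S$ denotes the $\mathbb{F}_q$-vector space of vectors $(v_s)_{S}=(v_s)_{s\in S}$ with entries in $\mathbb{F}_q$ indexed by $S$. Let $A=A_N=\{0,1,\dots,q-1\}^N$ and $\Omega=\Omega_N=\mathbb{F}_q^N$. For $\underline\omega=(\omega_1,\dots,\omega_N)\in\mathbb{F}_q^N$ and $\underline a=(a_1,\dots,a_N)\in\mathbb{N}_0^N$ write $\underline\omega^{\underline a}=\omega_1^{a_1}\cdots\omega_N^{a_N}$, with the convention $0^0=1$. Generalized DFT: $\mathcal{F}=\mathcal{F}_N:V_\Omega\to V_A$, $(c_{\underline\omega})_\Omega\mapsto(h_{\underline a})_A$ with $h_{\underline a}=\sum_{\underline\omega\in\Omega}c_{\underline\omega}\underline\omega^{\underline a}$. Generalized IDFT: $\mathcal{F}^{-1}=\mathcal{F}_N^{-1}:V_A\to V_\Omega$, $(h_{\underline a})_A\mapsto(c_{\underline\omega})_\Omega$, defined as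 follows. For $\underline\omega\in\Omega$ let $I=I_{\underline\omega}=\{i_1<\dots<i_m\}=\{i:\omega_i\ne0\}\subseteq\{1,\dots,N\}$ (so $m$ is the number of nonzero coordinates). Then $$c_{\underline\omega}=(-1)^m\sum_{l_1,\dots,l_m=1}^{q-1}\Big\{\sum_{J\subseteq\{1,\dots,N\}\setminus I}(-1)^{|J|}h_{\underline i(I,J)}\Big\}\omega_{i_1}^{-l_1}\cdots\omega_{i_m}^{-l_m},$$ where $J$ runs over all subsets of $\{1,\dots,N\}\setminus I$ and $\underline i(I,J)=(b_1,\dots,b_N)\in A$ is given by $b_{i_j}=l_j$ for $1\le j\le m$, $b_i=q-1$ for $i\in J$, and $b_i=0$ for $i\notin I\cup J$. (For $m=0$ the outer sum has the single empty term.) *)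

theory Defs
  imports Main "HOL-Library.FuncSet"
begin

text \<open>Coordinates are indexed by 0..<N (instead of 1..N). The field F_q is an
arbitrary finite field type 'a, q = CARD('a). A vector in V_S is a function S \<Rightarrow> 'a (only values on S matter).\<close>

definition Omega :: "nat \<Rightarrow> 'a::{finite,field} list set" where
  "Omega N = {w. length w = N}"

definition Aset :: "nat \<Rightarrow> nat \<Rightarrow> nat list set" where
  "Aset q N = {a. length a = N \<and> (\<forall>x\<in>set a. x < q)}"

definition monpow :: "'a::field list \<Rightarrow> nat list \<Rightarrow> 'a" where
  "monpow w a = (\<Prod>i<length w. (w ! i) ^ (a ! i))"

definition DFT :: "nat \<Rightarrow> ('a::{finite,field} list \<Rightarrow> 'a) \<Rightarrow> (nat list \<Rightarrow> 'a)" where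
  "DFT N c = (\<lambda>a. \<Sum>w\<in>Omega N. c w * monpow w a)"

definition idx :: "nat \<Rightarrow> nat \<Rightarrow> nat set \<Rightarrow> nat set \<Rightarrow> (nat \<Rightarrow> nat) \<Rightarrow> nat list" where
  "idx q N I J l = map (\<lambda>i. if i \<in> I then l i else if i \<in> J then q - 1 else 0) [0..<N]"

definition IDFT :: "nat \<Rightarrow> (nat list \<Rightarrow> 'a::{finite,field}) \<Rightarrow> ('a list \<Rightarrow> 'a)" where
  "IDFT N h = (\<lambda>w.
     let q = card (UNIV :: 'a set); I = {i. i < N \<and> w ! i \<noteq> 0}; m = card I in
     (-1) ^ m * (\<Sum>l\<in>PiE I (\<lambda>_. {1..q-1}).
        (\<Sum>J\<in>Pow ({0..<N} - I). (-1) ^ card J * h (idx q N I J l))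
        * (\<Prod>i\<in>I. inverse (w ! i) ^ l i)))"

end

theory Submission imports Defs begin

(*
  Proof idea.  Both transforms are visibly linear, so the content of the theorem is that
  they are mutually inverse.  Write q = |F_q|.

  (1) Character orthogonality: applying IDFT to the monomial function a \<mapsto> \<mu>^a returns the
      indicator of \<mu>.  At a coordinate i outside the support I of w, the alternating sum over J
      factors into 1 - \<mu>_i^(q-1), which by Fermat is [\<mu>_i = 0]; at a coordinate i in I the sum
      over l_i is the geometric sum \<Sum>_{k=1}^{q-1} (\<mu>_i/w_i)^k = -[\<mu>_i = w_i].
  (2) Since DFT c is a linear combination of such monomials with coefficients c, linearity of
      IDFT and (1) give IDFT (DFT c) = c on \<Omega>.
  (3) DFT \<circ> IDFT = id on A follows by counting: restricted to functions on \<Omega> and on A, DFT has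
      a left inverse, hence is injective, and both function spaces have q^(q^N) elements, so DFT
      is onto, and a left inverse of a bijection is also a right inverse.
*)

section \<open>Elementary facts about finite fields\<close>

lemma card_field_ge_2: "card (UNIV :: 'a::{finite,field} set) \<ge> 2"
proof -
  have "card {0::'a, 1} \<le> card (UNIV :: 'a set)"
    by (rule card_mono) simp_all
  thus ?thesis by simp
qed

text \<open>The characteristic divides the order: translation by 1 permutes the field, so
  \<open>\<Sum>y = \<Sum>(y + 1) = \<Sum>y + q\<close>.\<close>
lemma of_nat_card_field: "(of_nat (card (UNIV :: 'a::{finite,field} set)) :: 'a) = 0"
proof -
  have "(\<Sum>y\<in>UNIV. y) = (\<Sum>y\<in>UNIV. y + (1::'a))"
    by (rule sum.reindex_bij_witness[of _ "\<lambda>y. y + 1" "\<lambda>y. y - 1"]) auto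
  also have "\<dots> = (\<Sum>y\<in>UNIV. y) + of_nat (card (UNIV :: 'a set))"
    by (simp add: sum.distrib)
  finally show ?thesis by simp
qed

text \<open>Fermat's little theorem for an arbitrary finite field: multiplication by a unit
  permutes the units.\<close>
lemma field_fermat:
  assumes "(x::'a::{finite,field}) \<noteq> 0"
  shows "x ^ (card (UNIV :: 'a set) - 1) = 1"
proof -
  let ?U = "UNIV - {0::'a}"
  have card_U: "card ?U = card (UNIV :: 'a set) - 1"
    by (simp add: card_Diff_subset)
  have "(\<Prod>y\<in>?U. y) = (\<Prod>y\<in>?U. x * y)"
    by (rule prod.reindex_bij_witness[of _ "\<lambda>y. x * y" "\<lambda>y. y / x"]) (use assms in auto)
  also have "\<dots> = x ^ card ?U * (\<Prod>y\<in>?U. y)"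
    by (simp add: prod.distrib)
  finally have "1 * (\<Prod>y\<in>?U. y) = x ^ card ?U * (\<Prod>y\<in>?U. y)" by simp
  moreover have "(\<Prod>y\<in>?U. y) \<noteq> 0" by simp
  ultimately show ?thesis
    using card_U by (metis mult_right_cancel)
qed

lemma field_power_card: "(x::'a::{finite,field}) ^ card (UNIV :: 'a set) = x"
proof (cases "x = 0")
  case True
  thus ?thesis using card_field_ge_2[where 'a='a] by simp
next
  case False
  have "card (UNIV :: 'a set) = Suc (card (UNIV :: 'a set) - 1)"
    using card_field_ge_2[where 'a='a] by simp
  hence "x ^ card (UNIV :: 'a set) = x * x ^ (card (UNIV :: 'a set) - 1)"
    by (metis power_Suc)
  thus ?thesis using field_fermat[OF False] by simp
qed

text \<open>Fermat in indicator form; this evaluates the alternating sum over \<open>J\<close> in the IDFT.\<close>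
lemma one_minus_power_card_minus_1:
  "1 - (x::'a::{finite,field}) ^ (card (UNIV :: 'a set) - 1) = (if x = 0 then 1 else 0)"
  using field_fermat[of x] card_field_ge_2[where 'a='a] by auto

text \<open>The geometric sum over all nonzero exponents below \<open>q\<close> detects \<open>x = 1\<close>;
  this evaluates the sums over the exponents \<open>l\<close> in the IDFT.\<close>
lemma geometric_sum_field:
  "(\<Sum>k = 1..card (UNIV :: 'a::{finite,field} set) - 1. (x::'a) ^ k) = (if x = 1 then -1 else 0)"
proof -
  let ?q = "card (UNIV :: 'a set)"
  have q2: "?q \<ge> 2" by (rule card_field_ge_2)
  show ?thesis
  proof (cases "x = 1")
    case True
    have "(of_nat (?q - 1) :: 'a) = of_nat ?q - 1"
      using q2 by (simp add: of_nat_diff)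
    thus ?thesis using True of_nat_card_field[where 'a='a] by simp
  next
    case False
    have "(1 - x) * (\<Sum>k = 1..?q - 1. x ^ k) = x ^ 1 - x ^ Suc (?q - 1)"
      by (rule sum_gp_multiplied) (use q2 in auto)
    also have "Suc (?q - 1) = ?q" using q2 by simp
    finally have "(1 - x) * (\<Sum>k = 1..?q - 1. x ^ k) = 0"
      using field_power_card[of x] by simp
    thus ?thesis using False by simp
  qed
qed


lemma prod_indicator:
  "finite S \<Longrightarrow> (\<Prod>i\<in>S. if P i then 1 else 0 :: 'a::comm_semiring_1) = (if \<forall>i\<in>S. P i then 1 else 0)"
  by (induction S rule: finite_induct) auto

lemma sum_Pow_signed_prod:
  fixes f :: "'b \<Rightarrow> 'a::comm_ring_1"
  assumes "finite C"
  shows "(\<Sum>J\<in>Pow C. (-1) ^ card J * prod f J) = (\<Prod>i\<in>C. 1 - f i)"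
proof -
  have "(\<Prod>i\<in>C. 1 - f i) = (\<Prod>i\<in>C. - f i + 1)" by simp
  also have "\<dots> = (\<Sum>J\<in>Pow C. (\<Prod>i\<in>J. - f i) * (\<Prod>i\<in>C - J. 1))"
    by (rule prod_add[OF assms])
  also have "\<dots> = (\<Sum>J\<in>Pow C. (-1) ^ card J * prod f J)"
    by (intro sum.cong refl) (simp add: prod_uminus)
  finally show ?thesis ..
qed

lemma image_eq_if_left_inverse_card_eq:
  assumes "finite T" "card S = card T" "f ` S \<subseteq> T" "\<And>x. x \<in> S \<Longrightarrow> g (f x) = x"
  shows "f ` S = T"
proof (rule card_subset_eq[OF assms(1,3)])
  have "inj_on f S" by (rule inj_on_inverseI[where g=g]) (rule assms(4))
  thus "card (f ` S) = card T" using assms(2) by (simp add: card_image)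
qed


lemma Omega_eq: "Omega N = {xs :: 'a::{finite,field} list. set xs \<subseteq> UNIV \<and> length xs = N}"
  unfolding Omega_def by simp

lemma finite_Omega: "finite (Omega N :: 'a::{finite,field} list set)"
  unfolding Omega_eq by (rule finite_lists_length_eq) simp

lemma card_Omega: "card (Omega N :: 'a::{finite,field} list set) = card (UNIV :: 'a set) ^ N"
  unfolding Omega_eq by (rule card_lists_length_eq) simp

lemma Aset_eq: "Aset q N = {xs. set xs \<subseteq> {..<q} \<and> length xs = N}"
  unfolding Aset_def by auto

lemma finite_Aset: "finite (Aset q N)"
  unfolding Aset_eq by (simp add: finite_lists_length_eq)

lemma card_Aset: "card (Aset q N) = q ^ N"
  unfolding Aset_eq by (simp add: card_lists_length_eq)

lemma idx_in_Aset:
  assumes "l \<in> PiE I (\<lambda>_. {1..card (UNIV :: 'a::{finite,field} set) - 1})"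
  shows "idx (card (UNIV :: 'a set)) N I J l \<in> Aset (card (UNIV :: 'a set)) N"
proof -
  have q2: "card (UNIV :: 'a set) \<ge> 2" by (rule card_field_ge_2)
  have "l i < card (UNIV :: 'a set)" if "i \<in> I" for i
    using assms that q2 by (auto simp: PiE_def Pi_def)
  thus ?thesis unfolding Aset_def idx_def using q2 by auto
qed

lemma monpow_idx:
  fixes \<mu> :: "'a::field list"
  assumes "length \<mu> = N" "I \<subseteq> {0..<N}" "J \<subseteq> {0..<N} - I"
  shows "monpow \<mu> (idx q N I J l) = (\<Prod>i\<in>I. (\<mu> ! i) ^ l i) * (\<Prod>i\<in>J. (\<mu> ! i) ^ (q - 1))"
proof -
  have "monpow \<mu> (idx q N I J l)
      = (\<Prod>i\<in>{0..<N}. if i \<in> I then (\<mu> ! i) ^ l i else if i \<in> J then (\<mu> ! i) ^ (q - 1) else 1)"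
    unfolding monpow_def idx_def using assms(1) lessThan_atLeast0 by (intro prod.cong) auto
  also have "\<dots> = (\<Prod>i\<in>{0..<N} \<inter> I. (\<mu> ! i) ^ l i)
                * (\<Prod>i\<in>{0..<N} - I. if i \<in> J then (\<mu> ! i) ^ (q - 1) else 1)"
    by (simp add: prod.If_cases Diff_eq)
  also have "(\<Prod>i\<in>{0..<N} - I. if i \<in> J then (\<mu> ! i) ^ (q - 1) else 1) = (\<Prod>i\<in>J. (\<mu> ! i) ^ (q - 1))"
    using assms(3) by (simp add: prod.If_cases Int_absorb1 Diff_eq)
  finally show ?thesis using assms(2) by (simp add: Int_absorb1)
qed


lemma DFT_linear: "DFT N (\<lambda>w. c w + s * d w) a = DFT N c a + s * DFT N d a"
  unfolding DFT_def by (simp add: sum.distrib sum_distrib_left algebra_simps)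

lemma IDFT_linear: "IDFT N (\<lambda>a. h a + s * g a) w = IDFT N h w + s * IDFT N g w"
  unfolding IDFT_def Let_def by (simp add: sum.distrib sum_distrib_left algebra_simps)

lemma IDFT_scale: "IDFT N (\<lambda>a. s * h a) w = s * IDFT N h w"
  using IDFT_linear[of N "\<lambda>a. 0" s h w] by (simp add: IDFT_def)

lemma IDFT_sum:
  assumes "finite S"
  shows "IDFT N (\<lambda>a. \<Sum>x\<in>S. f x a) w = (\<Sum>x\<in>S. IDFT N (f x) w)"
  using assms
proof (induction S rule: finite_induct)
  case empty
  thus ?case by (simp add: IDFT_def)
next
  case (insert x S)
  have "IDFT N (\<lambda>a. \<Sum>y\<in>insert x S. f y a) w = IDFT N (\<lambda>a. f x a + 1 * (\<Sum>y\<in>S. f y a)) w"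
    using insert by simp
  also have "\<dots> = IDFT N (f x) w + IDFT N (\<lambda>a. \<Sum>y\<in>S. f y a) w"
    by (subst IDFT_linear) simp
  finally show ?case using insert by simp
qed

lemma DFT_cong: "(\<And>w. w \<in> Omega N \<Longrightarrow> c w = d w) \<Longrightarrow> DFT N c a = DFT N d a"
  unfolding DFT_def by (intro sum.cong) auto

lemma IDFT_cong:
  fixes h g :: "nat list \<Rightarrow> 'a::{finite,field}"
  assumes "\<And>a. a \<in> Aset (card (UNIV :: 'a set)) N \<Longrightarrow> h a = g a"
  shows "IDFT N h w = IDFT N g w"
  unfolding IDFT_def Let_def using assms idx_in_Aset[where 'a='a]
  by (intro arg_cong2[where f="(*)"] refl sum.cong) auto


section \<open>Orthogonality: the IDFT of a monomial is an indicator\<close>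

lemma alternating_sum_monpow_idx:
  fixes \<mu> :: "'a::{finite,field} list"
  defines "q \<equiv> card (UNIV :: 'a set)"
  assumes "length \<mu> = N" "I \<subseteq> {0..<N}"
  shows "(\<Sum>J\<in>Pow ({0..<N} - I). (-1) ^ card J * monpow \<mu> (idx q N I J l))
       = (\<Prod>i\<in>I. (\<mu> ! i) ^ l i) * (\<Prod>i\<in>{0..<N} - I. if \<mu> ! i = 0 then 1 else 0)"
proof -
  have "(\<Sum>J\<in>Pow ({0..<N} - I). (-1) ^ card J * monpow \<mu> (idx q N I J l))
      = (\<Prod>i\<in>I. (\<mu> ! i) ^ l i) * (\<Sum>J\<in>Pow ({0..<N} - I). (-1) ^ card J * (\<Prod>i\<in>J. (\<mu> ! i) ^ (q - 1)))"
    unfolding sum_distrib_left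
    by (intro sum.cong refl) (use assms in \<open>simp add: monpow_idx mult_ac\<close>)
  also have "(\<Sum>J\<in>Pow ({0..<N} - I). (-1) ^ card J * (\<Prod>i\<in>J. (\<mu> ! i) ^ (q - 1)))
      = (\<Prod>i\<in>{0..<N} - I. if \<mu> ! i = 0 then 1 else 0)"
    by (simp only: sum_Pow_signed_prod[OF finite_Diff[OF finite_atLeastLessThan]] q_def
        one_minus_power_card_minus_1)
  finally show ?thesis .
qed

lemma sum_PiE_geometric:
  fixes y :: "nat \<Rightarrow> 'a::{finite,field}"
  assumes "finite I"
  shows "(\<Sum>l\<in>PiE I (\<lambda>_. {1..card (UNIV :: 'a set) - 1}). \<Prod>i\<in>I. y i ^ l i)
       = (-1) ^ card I * (\<Prod>i\<in>I. if y i = 1 then 1 else 0)"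
proof -
  have "(\<Sum>l\<in>PiE I (\<lambda>_. {1..card (UNIV :: 'a set) - 1}). \<Prod>i\<in>I. y i ^ l i)
      = (\<Prod>i\<in>I. \<Sum>k = 1..card (UNIV :: 'a set) - 1. y i ^ k)"
    by (rule prod_sum_PiE[symmetric]) (use assms in auto)
  also have "\<dots> = (\<Prod>i\<in>I. (-1) * (if y i = 1 then 1 else 0))"
    by (intro prod.cong refl) (simp only: geometric_sum_field, simp)
  finally show ?thesis by (simp add: prod_uminus)
qed

text \<open>Combining both evaluations, the signs \<open>(-1)^m\<close> cancel and the remaining factors
  compare \<open>\<mu>\<close> and \<open>w\<close> coordinatewise.\<close>
theorem IDFT_monpow:
  fixes w \<mu> :: "'a::{finite,field} list"
  assumes "length w = N" "length \<mu> = N"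
  shows "IDFT N (monpow \<mu>) w = (if \<mu> = w then 1 else 0)"
proof -
  define I where "I = {i. i < N \<and> w ! i \<noteq> 0}"
  define C where "C = {0..<N} - I"
  define ind where "ind i = (if \<mu> ! i = w ! i then 1 else 0 :: 'a)" for i
  have I_sub: "I \<subseteq> {0..<N}" unfolding I_def by auto
  have fin_I: "finite I" using I_sub finite_subset by blast
  have ind_C: "(\<Prod>i\<in>C. if \<mu> ! i = 0 then 1 else 0) = prod ind C"
    by (intro prod.cong refl) (auto simp: C_def I_def ind_def)
  have ind_I: "(\<Prod>i\<in>I. if \<mu> ! i * inverse (w ! i) = 1 then 1 else 0) = prod ind I"
    by (intro prod.cong refl) (auto simp: I_def ind_def field_simps)
  have "IDFT N (monpow \<mu>) w = (-1) ^ card I * (\<Sum>l\<in>PiE I (\<lambda>_. {1..card (UNIV :: 'a set) - 1}).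
        (\<Prod>i\<in>I. (\<mu> ! i) ^ l i) * prod ind C * (\<Prod>i\<in>I. inverse (w ! i) ^ l i))"
    unfolding IDFT_def Let_def I_def[symmetric] C_def[symmetric]
    using alternating_sum_monpow_idx[OF assms(2) I_sub] ind_C by (simp add: C_def)
  also have "\<dots> = (-1) ^ card I * prod ind C
      * (\<Sum>l\<in>PiE I (\<lambda>_. {1..card (UNIV :: 'a set) - 1}). \<Prod>i\<in>I. (\<mu> ! i * inverse (w ! i)) ^ l i)"
    by (simp add: sum_distrib_left prod.distrib power_mult_distrib mult_ac)
  also have "\<dots> = ((-1) ^ card I * (-1) ^ card I) * (prod ind C * prod ind I)"
    unfolding sum_PiE_geometric[OF fin_I] ind_I by (simp add: mult_ac)
  also have "\<dots> = prod ind {0..<N}"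
    by (simp add: C_def prod.subset_diff[OF I_sub] power_mult_distrib[symmetric])
  also have "\<dots> = (if \<mu> = w then 1 else 0)"
    using assms by (simp add: ind_def prod_indicator list_eq_iff_nth_eq)
  finally show ?thesis .
qed


text \<open>\<open>DFT c\<close> is the combination of monomials \<open>\<Sum>\<mu>. c \<mu> \<cdot> \<mu>^a\<close>; by linearity and
  orthogonality the IDFT picks out the coefficient at \<open>w\<close>.\<close>
theorem IDFT_DFT:
  fixes c :: "'a::{finite,field} list \<Rightarrow> 'a"
  assumes w: "w \<in> Omega N"
  shows "IDFT N (DFT N c) w = c w"
proof -
  have "IDFT N (DFT N c) w = (\<Sum>\<mu>\<in>Omega N. IDFT N (\<lambda>a. c \<mu> * monpow \<mu> a) w)"
    unfolding DFT_def by (rule IDFT_sum[OF finite_Omega])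
  also have "\<dots> = (\<Sum>\<mu>\<in>Omega N. if \<mu> = w then c \<mu> else 0)"
    using w by (intro sum.cong refl) (simp add: IDFT_scale IDFT_monpow Omega_def)
  also have "\<dots> = c w"
    using w by (simp add: finite_Omega)
  finally show ?thesis .
qed

text \<open>Counting argument: on extensional functions, the restricted DFT has the restricted
  IDFT as left inverse, and both function spaces have \<open>q ^ q ^ N\<close> elements.\<close>
theorem DFT_IDFT:
  fixes h :: "nat list \<Rightarrow> 'a::{finite,field}"
  assumes a: "a \<in> Aset (card (UNIV :: 'a set)) N"
  shows "DFT N (IDFT N h) a = h a"
proof -
  let ?A = "Aset (card (UNIV :: 'a set)) N"
  let ?V\<Omega> = "PiE (Omega N :: 'a list set) (\<lambda>_. UNIV :: 'a set)"
  let ?VA = "PiE ?A (\<lambda>_. UNIV :: 'a set)"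
  define D where "D c = restrict (DFT N c) ?A" for c :: "'a list \<Rightarrow> 'a"
  define E where "E h = restrict (IDFT N h) (Omega N)" for h :: "nat list \<Rightarrow> 'a"
  have E_D: "E (D c) = c" if "c \<in> ?V\<Omega>" for c
  proof
    fix w
    show "E (D c) w = c w"
    proof (cases "w \<in> Omega N")
      case True
      have "IDFT N (D c) w = IDFT N (DFT N c) w"
        by (rule IDFT_cong) (simp add: D_def)
      thus ?thesis using IDFT_DFT[OF True] True by (simp add: E_def)
    next
      case False
      thus ?thesis using that by (simp add: E_def PiE_def extensional_def)
    qed
  qed
  have D_onto: "D ` ?V\<Omega> = ?VA"
  proof (rule image_eq_if_left_inverse_card_eq[where g=E])
    show "finite ?VA" by (intro finite_PiE finite_Aset) simp
    show "card ?V\<Omega> = card ?VA"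
      by (simp add: card_PiE finite_Omega finite_Aset card_Omega card_Aset)
    show "D ` ?V\<Omega> \<subseteq> ?VA" by (auto simp: D_def)
  qed (rule E_D)
  have "restrict h ?A \<in> D ` ?V\<Omega>"
    unfolding D_onto by simp
  then obtain c where h_eq: "restrict h ?A = D c" and c: "c \<in> ?V\<Omega>"
    by (rule imageE)
  have "DFT N (IDFT N h) a = DFT N (E (restrict h ?A)) a"
    by (intro DFT_cong) (simp add: E_def, intro IDFT_cong, simp)
  also have "\<dots> = D c a" using E_D[OF c] h_eq a by (simp add: D_def)
  also have "\<dots> = h a" using h_eq[symmetric] a by simp
  finally show ?thesis .
qed

theorem mainTheorem1:
  fixes N :: nat
  assumes "N \<ge> 1"
  shows "(\<forall>(c::'a::{finite,field} list \<Rightarrow> 'a) d (s::'a). \<forall>a\<in>Aset (card (UNIV :: 'a set)) N.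
            DFT N (\<lambda>w. c w + s * d w) a = DFT N c a + s * DFT N d a)
       \<and> (\<forall>(h::nat list \<Rightarrow> 'a) g (s::'a). \<forall>w\<in>Omega N.
            IDFT N (\<lambda>a. h a + s * g a) w = IDFT N h w + s * IDFT N g w)
       \<and> (\<forall>c::'a list \<Rightarrow> 'a. \<forall>w\<in>Omega N. IDFT N (DFT N c) w = c w)
       \<and> (\<forall>h::nat list \<Rightarrow> 'a. \<forall>a\<in>Aset (card (UNIV :: 'a set)) N. DFT N (IDFT N h) a = h a)"
  by (simp add: DFT_linear IDFT_linear IDFT_DFT DFT_IDFT)

end
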